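(* Let $m \geq d > 0$ be integers and let $A(x)=\sum_{i=0}^d a_i x^i\in\mathbb{Z}[x]$ be a primitive polynomial of degree $d$ with $a_0\neq 0$. Let $\theta_1,\dots,\theta_m$ be real numbers such that $\theta_1,\dots,\theta_d$ are linearly independent over $\mathbb{Q}$ and $\sum_{i=0}^d a_i\theta_{j+i}=0$ for all $1\le j\le m-d$. Then the set \[ S_{\theta,m}=\{\pi_m(t\theta_1,t\theta_2,\dots,t\theta_m) : t\in\mathbb{R}\}\subseteq \mathbb{T}^m \] is $\epsilon$-dense for every \[ \epsilon \;\geq\; \min\left\{\frac{1}{M(A(x/2))},\ \frac{2^d}{M(A(2x))}\right\}, \] and moreover this minimum is at most $2^{[d/2]}/M(A(x))$. In particular, $S_{\theta,m}$ is $\epsilon$-dense for every $\epsilon\ge 2^{[d/2]}/M(A(x))$ (e.g. with $\theta_i=\alpha^{i-1}$ for a real algebraic number $\alpha$ of degree $d$ with minimal primitive integral polynomial $A$).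
   Context: $\mathbb{T}^m=\mathbb{R}^m/\mathbb{Z}^m$ and $\pi_m:\mathbb{R}^m\to\mathbb{T}^m$ is the canonical projection. For $\epsilon>0$ let $I_\epsilon=[-\epsilon/2,\epsilon/2]^m\subseteq\mathbb{R}^m$ and $C_\epsilon=\pi_m(I_\epsilon)$. A set $S\subseteq\mathbb{T}^m$ is called $\epsilon$-dense if $S+C_{\bar\epsilon}=\mathbb{T}^m$ for every $\bar\epsilon>\epsilon$ (equivalently, $S+C_\epsilon$ is dense in $\mathbb{T}^m$). For a polynomial $P(x)=c_d\prod_{i=1}^d(x-\alpha_i)\in\mathbb{C}[x]$ with $c_d\ne0$ and nonzero constant term, its Mahler measure is $M(P)=|c_d|\prod_{i=1}^d\max\{1,|\alpha_i|\}$. $[d/2]$ denotes the integer part of $d/2$. *)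

theory Defs
  imports "HOL-Analysis.Analysis" "HOL-Computational_Algebra.Computational_Algebra"
begin

definition mahler_measure :: "complex poly \<Rightarrow> real" where
  "mahler_measure p = cmod (lead_coeff p) * prod_mset (image_mset (\<lambda>\<alpha>. max 1 (cmod \<alpha>)) (proots p))"

text \<open>Points of the torus T^m are represented by their lifts in R^m, given as functions on the
  index set {1..m}. A set S of lifts projects to an eps-dense subset of T^m iff for every eps' > eps,
  S + C_eps' = T^m, i.e. every x in R^m is congruent mod Z^m to s + u with s in S and u in I_eps'.\<close>
definition eps_dense :: "nat \<Rightarrow> real \<Rightarrow> (nat \<Rightarrow> real) set \<Rightarrow> bool" where
  "eps_dense m \<epsilon> S \<longleftrightarrow>
     (\<forall>\<epsilon>'>\<epsilon>. \<forall>x::nat \<Rightarrow> real. \<exists>s\<in>S. \<exists>k::nat \<Rightarrow> int. \<exists>u::nat \<Rightarrow> real.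
        (\<forall>i\<in>{1..m}. \<bar>u i\<bar> \<le> \<epsilon>' / 2 \<and> x i = s i + u i + of_int (k i)))"

definition S_line :: "(nat \<Rightarrow> real) \<Rightarrow> (nat \<Rightarrow> real) set" where
  "S_line \<theta> = {(\<lambda>i. t * \<theta> i) | t. True}"

end

theory Submission
  imports Defs
begin

(*
  Write rec_val p y j = sum_i p_i y_(j+i), so the hypothesis reads rec_val A theta j = 0 for
  1 <= j <= n = m - d.  To approximate a target x in R^m modulo Z^m by some t*theta:

  (1) Lattice step.  Move x by at most mu/2 to a point y whose recurrence values rec_val A y j
      (1 <= j <= n) are integers.  Factor A = c * prod (z - alpha) over C: the roots with
      |alpha| >= 1/2 are treated together by greedy rounding, the roots with |alpha| < 1/2 by
      inverting a contracting recurrence; this gives mu = 1/M(A(x/2)).  The same argument for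
      the reciprocal polynomial, reading the sequence backwards, gives mu = 2^d/M(A(2x)).
  (2) Kronecker step.  As A is primitive, every integer vector of recurrence values is attained
      by an integer sequence, so y is an integer sequence plus a solution v of the homogeneous
      recurrence.  Kronecker's theorem approximates the first d terms of v by t*theta mod Z,
      and the error, again a solution of the recurrence, grows at most geometrically.
  Finally, counting the roots inside and outside the unit circle shows that the smaller of the
  two values of mu is at most 2^[d/2]/M(A).
*)

section \<open>The recurrence operator\<close>

definition rec_val :: "'a::comm_semiring_1 poly \<Rightarrow> (nat \<Rightarrow> 'a) \<Rightarrow> nat \<Rightarrow> 'a" where
  "rec_val p y j = (\<Sum>i\<le>degree p. coeff p i * y (j + i))"

lemma rec_val_upto:
  assumes "degree p \<le> N"
  shows "rec_val p y j = (\<Sum>i\<le>N. coeff p i * y (j + i))"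
  unfolding rec_val_def
  by (rule sum.mono_neutral_left) (use assms in \<open>auto simp: coeff_eq_0\<close>)

lemma rec_val_add: "rec_val (p + q) y j = rec_val p y j + rec_val q y j"
proof -
  define N where "N = max (degree p) (degree q)"
  have "degree (p + q) \<le> N" unfolding N_def by (rule degree_add_le) auto
  then show ?thesis
    by (simp add: rec_val_upto[of _ N] N_def sum.distrib algebra_simps)
qed

lemma rec_val_smult: "rec_val (smult a p) y j = a * rec_val p y j"
proof -
  have "rec_val (smult a p) y j = (\<Sum>i\<le>degree p. coeff (smult a p) i * y (j + i))"
    by (rule rec_val_upto) (rule degree_smult_le)
  then show ?thesis by (simp add: rec_val_def sum_distrib_left mult.assoc)
qed

lemma rec_val_pCons0: "rec_val (pCons 0 p) y j = rec_val p y (Suc j)"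
proof -
  have "rec_val (pCons 0 p) y j = (\<Sum>i\<le>Suc (degree p). coeff (pCons 0 p) i * y (j + i))"
    by (rule rec_val_upto) (simp add: degree_pCons_le)
  also have "\<dots> = (\<Sum>i\<le>degree p. coeff p i * y (Suc j + i))"
    by (subst sum.atMost_Suc_shift) simp
  finally show ?thesis by (simp add: rec_val_def)
qed

lemma rec_val_const: "rec_val [:a:] y j = a * y j"
  by (simp add: rec_val_def)

lemma rec_val_one: "rec_val 1 y j = y j"
  by (simp add: rec_val_def)

(* The operator of a product is the composition of the operators of the factors; this is
   what allows a factorisation of the characteristic polynomial to be used one factor at a time. *)
lemma rec_val_mult: "rec_val (p * q) y j = rec_val p (rec_val q y) j"
proof (induction p arbitrary: j)
  case 0
  then show ?case by (simp add: rec_val_def)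
next
  case (pCons a p)
  have "pCons a p * q = smult a q + pCons 0 (p * q)" by simp
  then have "rec_val (pCons a p * q) y j = a * rec_val q y j + rec_val (p * q) y (Suc j)"
    by (simp only: rec_val_add rec_val_smult rec_val_pCons0)
  also have "\<dots> = a * rec_val q y j + rec_val p (rec_val q y) (Suc j)" using pCons.IH by simp
  also have "\<dots> = rec_val (pCons a p) (rec_val q y) j"
  proof -
    have "pCons a p = [:a:] + pCons 0 p" by simp
    then show ?thesis by (metis rec_val_add rec_val_const rec_val_pCons0)
  qed
  finally show ?case .
qed

lemma rec_val_cong:
  "(\<And>i. i \<le> degree p \<Longrightarrow> y (j + i) = z (j + i)) \<Longrightarrow> rec_val p y j = rec_val p z j"
  by (simp add: rec_val_def)

lemma rec_val_of_int:
  "rec_val (map_poly of_int p) (\<lambda>i. of_int (y i) :: real) j = of_int (rec_val p y j)"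
  by (simp add: rec_val_def degree_map_poly coeff_map_poly)

lemma rec_val_diff:
  "rec_val (p::'a::comm_ring_1 poly) (\<lambda>i. y i - z i) j = rec_val p y j - rec_val p z j"
  by (simp add: rec_val_def algebra_simps sum_subtractf)

lemma rec_val_add_seq: "rec_val p (\<lambda>i. y i + z i) j = rec_val p y j + rec_val p z j"
  by (simp add: rec_val_def algebra_simps sum.distrib)

lemma rec_val_scale_seq: "rec_val p (\<lambda>i. c * y i) j = c * rec_val p y j"
  by (simp add: rec_val_def sum_distrib_left mult_ac)

lemma rec_val_Re:
  "Re (rec_val (map_poly of_real p) u j) = rec_val p (\<lambda>i. Re (u i)) j"
  by (simp add: rec_val_def degree_map_poly coeff_map_poly Re_sum)

lemma rec_val_upd:
  fixes p :: "'a::comm_semiring_1 poly"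
  shows "rec_val p (K(t := K t + v)) j
       = rec_val p K j + (if j \<le> t \<and> t - j \<le> degree p then coeff p (t - j) * v else 0)"
proof -
  have "K(t := K t + v) = (\<lambda>i. K i + (if i = t then v else 0))" by auto
  then have "rec_val p (K(t := K t + v)) j = rec_val p K j + rec_val p (\<lambda>i. if i = t then v else 0) j"
    by (simp only: rec_val_add_seq)
  also have "rec_val p (\<lambda>i. if i = t then v else 0) j
      = (\<Sum>i\<le>degree p. if i = t - j \<and> j \<le> t then coeff p (t - j) * v else 0)"
    unfolding rec_val_def by (intro sum.cong) auto
  also have "\<dots> = (if j \<le> t \<and> t - j \<le> degree p then coeff p (t - j) * v else 0)"
    by (cases "j \<le> t") (auto simp: sum.delta)
  finally show ?thesis .
qed

lemma rec_val_upd_self: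
  fixes p :: "'a::comm_ring_1 poly"
  shows "rec_val p (w(j := v)) j = rec_val p (w(j := z)) j + coeff p 0 * (v - z)"
  using rec_val_upd[of p "w(j := z)" j "v - z" j] by simp

section \<open>Integer sequences with prescribed recurrence values\<close>

(* Solving the recurrence forwards needs division by the leading coefficient c.  After scaling
   by c^N this is unnecessary: an arbitrary initial segment f and arbitrary values n on
   1..N are realised, both multiplied by c^N. *)
lemma rec_val_scaled_solution:
  fixes A :: "'a::comm_ring_1 poly" and f n :: "nat \<Rightarrow> 'a"
  assumes d: "degree A = d"
  shows "\<exists>K. (\<forall>i. i \<le> d \<longrightarrow> K i = coeff A d ^ N * f i)
           \<and> (\<forall>j. 1 \<le> j \<longrightarrow> j \<le> N \<longrightarrow> rec_val A K j = coeff A d ^ N * n j)"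
proof (induction N)
  case 0
  then show ?case by (intro exI[of _ f]) auto
next
  case (Suc N)
  define c where "c = coeff A d"
  from Suc obtain K where K1: "\<forall>i. i \<le> d \<longrightarrow> K i = c ^ N * f i"
    and K2: "\<forall>j. 1 \<le> j \<longrightarrow> j \<le> N \<longrightarrow> rec_val A K j = c ^ N * n j" by (auto simp: c_def)
  define t where "t = Suc N + d"
  define S where "S = (\<Sum>i<d. coeff A i * K (Suc N + i))"
  define K0 where "K0 = (\<lambda>i. c * K i)"
  define K' where "K' = K0(t := c ^ N * n (Suc N) - S)"
  have new_row: "rec_val A K' (Suc N) = c ^ Suc N * n (Suc N)"
  proof -
    have "rec_val A K' (Suc N) = (\<Sum>i<Suc d. coeff A i * K' (Suc N + i))"
      by (simp add: rec_val_def d lessThan_Suc_atMost)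
    also have "\<dots> = (\<Sum>i<d. coeff A i * K' (Suc N + i)) + c * K' t"
      by (simp add: c_def t_def)
    also have "(\<Sum>i<d. coeff A i * K' (Suc N + i)) = c * S"
      unfolding S_def sum_distrib_left by (intro sum.cong) (auto simp: K'_def K0_def t_def)
    also have "K' t = c ^ N * n (Suc N) - S" by (simp add: K'_def)
    finally show ?thesis by (simp add: algebra_simps)
  qed
  show ?case
  proof (intro exI[of _ K'] conjI allI impI)
    fix i assume "i \<le> d"
    then show "K' i = coeff A d ^ Suc N * f i" using K1 by (simp add: K'_def K0_def t_def c_def)
  next
    fix j assume j: "1 \<le> j" "j \<le> Suc N"
    show "rec_val A K' j = coeff A d ^ Suc N * n j"
    proof (cases "j = Suc N")
      case True then show ?thesis using new_row by (simp add: c_def)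
    next
      case False
      then have "j \<le> N" using j by simp
      have "rec_val A K' j = rec_val A K0 j"
        unfolding K'_def by (rule rec_val_cong) (use \<open>j \<le> N\<close> d in \<open>auto simp: t_def\<close>)
      also have "\<dots> = c * rec_val A K j" by (simp add: K0_def rec_val_scale_seq)
      finally show ?thesis using K2 j \<open>j \<le> N\<close> by (simp add: c_def)
    qed
  qed
qed

lemma primitive_coeff_not_dvd:
  fixes A :: "int poly" and p :: int
  assumes "content A = 1" "prime p"
  shows "\<exists>s. \<not> p dvd coeff A s"
proof -
  have "\<not> p dvd 1" using assms(2) by (meson not_prime_unit)
  then have "\<not> p dvd content A" using assms(1) by simp
  then have "\<not> [:p:] dvd A" by (simp add: const_poly_dvd_iff_dvd_content)
  then show ?thesis by (simp add: const_poly_dvd_iff)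
qed

(* Modulo a prime p every vector of recurrence values is attained: correct the positions
   N, N-1, ..., 1 in turn through the first coefficient of A not divisible by p. *)
lemma rec_val_surj_mod_prime:
  fixes A :: "int poly" and p :: int
  assumes "content A = 1" "prime p"
  shows "\<exists>K. \<forall>j. 1 \<le> j \<longrightarrow> j \<le> N \<longrightarrow> p dvd (rec_val A K j - n j)"
proof -
  define s where "s = (LEAST s. \<not> p dvd coeff A s)"
  have s_ndvd: "\<not> p dvd coeff A s"
    unfolding s_def using primitive_coeff_not_dvd[OF assms] by (metis LeastI)
  have below_s: "p dvd coeff A i" if "i < s" for i using that not_less_Least s_def by blast
  have s_deg: "s \<le> degree A" using s_ndvd by (metis coeff_eq_0 dvd_0_right not_le)
  have "coprime p (coeff A s)" using s_ndvd assms(2) by (simp add: prime_imp_coprime)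
  then obtain u v where uv: "u * coeff A s + v * p = 1"
    using bezout_int[of "coeff A s" p] by (auto simp: coprime_iff_gcd_eq_1 gcd.commute)
  have "\<exists>K. \<forall>j. N - k < j \<longrightarrow> j \<le> N \<longrightarrow> p dvd (rec_val A K j - n j)" if "k \<le> N" for k
    using that
  proof (induction k)
    case 0 then show ?case by auto
  next
    case (Suc k)
    then obtain K where K: "\<forall>j. N - k < j \<longrightarrow> j \<le> N \<longrightarrow> p dvd (rec_val A K j - n j)" by auto
    define j0 where "j0 = N - k"
    define v0 where "v0 = u * (n j0 - rec_val A K j0)"
    define K' where "K' = K(j0 + s := K (j0 + s) + v0)"
    have K': "rec_val A K' j = rec_val A K j
        + (if j \<le> j0 + s \<and> j0 + s - j \<le> degree A then coeff A (j0 + s - j) * v0 else 0)" for j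
      unfolding K'_def by (rule rec_val_upd)
    show ?case
    proof (intro exI[of _ K'] allI impI)
      fix j assume j: "N - Suc k < j" "j \<le> N"
      show "p dvd (rec_val A K' j - n j)"
      proof (cases "j = j0")
        case True
        have "rec_val A K' j - n j = (coeff A s * u - 1) * (n j0 - rec_val A K j0)"
          using True s_deg by (simp add: K' v0_def algebra_simps)
        also have "coeff A s * u - 1 = - v * p" using uv by (simp add: algebra_simps)
        finally show ?thesis by simp
      next
        case False
        then have "N - k < j" "j0 < j" using j Suc.prems unfolding j0_def by linarith+
        then have "p dvd (rec_val A K' j - rec_val A K j)"
          using below_s[of "j0 + s - j"] by (auto simp: K')
        moreover have "p dvd (rec_val A K j - n j)" using K \<open>N - k < j\<close> j by blast
        ultimately have "p dvd (rec_val A K' j - rec_val A K j) + (rec_val A K j - n j)"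
          by (rule dvd_add)
        then show ?thesis by simp
      qed
    qed
  qed
  from this[of N] obtain K where "\<forall>j. 0 < j \<longrightarrow> j \<le> N \<longrightarrow> p dvd (rec_val A K j - n j)" by auto
  then show ?thesis by (intro exI[of _ K]) auto
qed

lemma rec_val_surj_mod:
  fixes A :: "int poly" and r :: nat
  assumes "content A = 1" "r > 0"
  shows "\<exists>K e. \<forall>j. 1 \<le> j \<longrightarrow> j \<le> N \<longrightarrow> rec_val A K j = n j + int r * e j"
  using assms(2)
proof (induction r arbitrary: n rule: less_induct)
  case (less r)
  show ?case
  proof (cases "r = 1")
    case True
    show ?thesis
      by (rule exI[of _ "\<lambda>_. 0"], rule exI[of _ "\<lambda>j. - n j"]) (simp add: True rec_val_def)
  next
    case False
    then obtain p where p: "prime p" "p dvd r" using prime_factor_nat by blast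
    then obtain r' where r': "r = p * r'" by (auto elim: dvdE)
    have "p > 1" using p(1) by (rule prime_gt_1_nat)
    then have "r' > 0" "r' < r" using less.prems r' by auto
    from less.IH[OF \<open>r' < r\<close> \<open>r' > 0\<close>, of n] obtain K1 e1 where
      K1: "\<forall>j. 1 \<le> j \<longrightarrow> j \<le> N \<longrightarrow> rec_val A K1 j = n j + int r' * e1 j" by auto
    have "prime (int p)" using p by simp
    from rec_val_surj_mod_prime[OF assms(1) this, of N "\<lambda>j. - e1 j"] obtain K2 where
      K2: "\<forall>j. 1 \<le> j \<longrightarrow> j \<le> N \<longrightarrow> int p dvd (rec_val A K2 j + e1 j)" by auto
    define e2 where "e2 = (\<lambda>j. (rec_val A K2 j + e1 j) div int p)"
    have e2: "rec_val A K2 j = - e1 j + int p * e2 j" if "1 \<le> j" "j \<le> N" for j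
      using K2 that by (simp add: e2_def)
    show ?thesis
    proof (rule exI[of _ "\<lambda>i. K1 i + int r' * K2 i"], rule exI[of _ e2], intro allI impI)
      fix j assume j: "1 \<le> j" "j \<le> N"
      have "rec_val A (\<lambda>i. K1 i + int r' * K2 i) j = rec_val A K1 j + int r' * rec_val A K2 j"
        by (simp add: rec_val_add_seq rec_val_scale_seq)
      also have "\<dots> = n j + int r' * e1 j + int r' * (- e1 j + int p * e2 j)"
        using K1 e2[OF j] j by simp
      also have "\<dots> = n j + int r * e2 j" using r' by (simp add: algebra_simps)
      finally show "rec_val A (\<lambda>i. K1 i + int r' * K2 i) j = n j + int r * e2 j" .
    qed
  qed
qed

(* For a primitive A every integer vector of recurrence values is attained exactly: solve
   modulo c^(2N) and remove the error by the scaled forward solution. *)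
lemma rec_val_surj:
  fixes A :: "int poly"
  assumes "content A = 1" "degree A = d"
  shows "\<exists>K. \<forall>j. 1 \<le> j \<longrightarrow> j \<le> N \<longrightarrow> rec_val A K j = n j"
proof -
  define c where "c = coeff A d"
  have "A \<noteq> 0" using assms(1) by auto
  then have "c \<noteq> 0" using assms(2) unfolding c_def by (metis leading_coeff_0_iff)
  define r where "r = nat (c ^ N * c ^ N)"
  have "c ^ N \<noteq> 0" using \<open>c \<noteq> 0\<close> by simp
  then have "0 < c ^ N * c ^ N" by (metis mult_pos_pos mult_neg_neg neq_iff)
  then have r: "int r = c ^ N * c ^ N" "r > 0" unfolding r_def by simp_all
  from rec_val_surj_mod[OF assms(1) r(2), of N n] obtain K1 e where
    K1: "\<forall>j. 1 \<le> j \<longrightarrow> j \<le> N \<longrightarrow> rec_val A K1 j = n j + int r * e j" by auto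
  from rec_val_scaled_solution[OF assms(2), where f="\<lambda>_. 0" and N=N and n="\<lambda>j. - (c ^ N * e j)"]
  obtain K2 where K2: "\<forall>j. 1 \<le> j \<longrightarrow> j \<le> N \<longrightarrow> rec_val A K2 j = c ^ N * - (c ^ N * e j)"
    by (auto simp: c_def)
  show ?thesis
  proof (intro exI[of _ "\<lambda>i. K1 i + K2 i"] allI impI)
    fix j assume "1 \<le> j" "j \<le> N"
    then show "rec_val A (\<lambda>i. K1 i + K2 i) j = n j"
      using K1 K2 r by (simp add: rec_val_add_seq algebra_simps)
  qed
qed

section \<open>The Kronecker step\<close>

lemma rec_val_zero_growth:
  fixes a :: "real poly" and e :: "nat \<Rightarrow> real"
  assumes deg: "degree a = d" and lead: "\<bar>coeff a d\<bar> \<ge> 1"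
    and rec: "\<forall>j. 1 \<le> j \<longrightarrow> j \<le> n \<longrightarrow> rec_val a e j = 0"
    and init: "\<forall>i. 1 \<le> i \<longrightarrow> i \<le> d \<longrightarrow> \<bar>e i\<bar> \<le> B" and B0: "B \<ge> 0"
  shows "\<forall>l. 1 \<le> l \<longrightarrow> l \<le> n + d \<longrightarrow> \<bar>e l\<bar> \<le> (1 + (\<Sum>i\<le>d. \<bar>coeff a i\<bar>)) ^ l * B"
proof -
  define C where "C = 1 + (\<Sum>i\<le>d. \<bar>coeff a i\<bar>)"
  have C1: "C \<ge> 1" unfolding C_def by (simp add: sum_nonneg)
  have C_ge: "(\<Sum>i<d. \<bar>coeff a i\<bar>) \<le> C"
    unfolding C_def by (simp add: lessThan_Suc_atMost[symmetric])
  have "\<bar>e l\<bar> \<le> C ^ l * B" if "1 \<le> l" "l \<le> n + d" for l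
    using that
  proof (induction l rule: less_induct)
    case (less l)
    show ?case
    proof (cases "l \<le> d")
      case True
      have "B \<le> C ^ l * B" using C1 B0 by (simp add: mult_le_cancel_right1 one_le_power)
      then show ?thesis using init less.prems True by (meson order_trans)
    next
      case False
      define j where "j = l - d"
      have j: "1 \<le> j" "j \<le> n" "l = j + d" using False less.prems by (auto simp: j_def)
      have "0 = rec_val a e j" using rec j by simp
      also have "\<dots> = (\<Sum>i<d. coeff a i * e (j + i)) + coeff a d * e l"
        by (simp add: rec_val_def deg lessThan_Suc_atMost[symmetric] j(3) add.commute)
      finally have eq: "coeff a d * e l = - (\<Sum>i<d. coeff a i * e (j + i))" by linarith
      have IH: "\<bar>e (j + i)\<bar> \<le> C ^ (l - 1) * B" if "i < d" for i
      proof -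
        have "\<bar>e (j + i)\<bar> \<le> C ^ (j + i) * B" using less.IH[of "j + i"] j that by auto
        also have "\<dots> \<le> C ^ (l - 1) * B"
          using C1 B0 j that by (intro mult_right_mono power_increasing) auto
        finally show ?thesis .
      qed
      have "\<bar>e l\<bar> \<le> \<bar>coeff a d\<bar> * \<bar>e l\<bar>" using lead by (simp add: mult_le_cancel_right1)
      also have "\<dots> = \<bar>\<Sum>i<d. coeff a i * e (j + i)\<bar>" using eq by (metis abs_minus_cancel abs_mult)
      also have "\<dots> \<le> (\<Sum>i<d. \<bar>coeff a i\<bar> * \<bar>e (j + i)\<bar>)"
        by (rule order_trans[OF sum_abs]) (simp add: abs_mult)
      also have "\<dots> \<le> (\<Sum>i<d. \<bar>coeff a i\<bar> * (C ^ (l - 1) * B))"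
        by (intro sum_mono mult_left_mono IH) auto
      also have "\<dots> = (\<Sum>i<d. \<bar>coeff a i\<bar>) * (C ^ (l - 1) * B)" by (simp add: sum_distrib_right)
      also have "\<dots> \<le> C * (C ^ (l - 1) * B)"
        using C_ge B0 C1 by (intro mult_right_mono) auto
      also have "\<dots> = C ^ l * B"
      proof -
        have "l = Suc (l - 1)" using j by simp
        then have "C ^ l = C * C ^ (l - 1)" by (metis power_Suc)
        then show ?thesis by simp
      qed
      finally show ?thesis .
    qed
  qed
  then show ?thesis unfolding C_def by blast
qed

(* Rational independence of theta_1, ..., theta_d survives division by a nonzero integer N and
   yields the two hypotheses of Kronecker's theorem for theta_(i+1)/N, i < d: injectivity ... *)
lemma rat_independent_scaled_inj:
  fixes \<theta> :: "nat \<Rightarrow> real" and N :: int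
  assumes N0: "N \<noteq> 0"
    and indep: "\<forall>q::nat \<Rightarrow> rat. (\<Sum>i=1..d. of_rat (q i) * \<theta> i) = 0 \<longrightarrow> (\<forall>i\<in>{1..d}. q i = 0)"
  shows "inj_on (\<lambda>i. \<theta> (Suc i) / of_int N) {..<d}"
proof (rule inj_onI, rule ccontr)
  fix a b assume ab: "a \<in> {..<d}" "b \<in> {..<d}" "\<theta> (Suc a) / of_int N = \<theta> (Suc b) / of_int N" "a \<noteq> b"
  then have eq: "\<theta> (Suc a) = \<theta> (Suc b)" using N0 by (simp add: divide_cancel_right)
  define q :: "nat \<Rightarrow> rat" where "q = (\<lambda>i. if i = Suc a then 1 else if i = Suc b then -1 else 0)"
  have "(\<Sum>i=1..d. of_rat (q i) * \<theta> i)
      = (\<Sum>i\<in>{1..d}. (if i = Suc a then \<theta> (Suc a) else 0) - (if i = Suc b then \<theta> (Suc b) else 0))"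
    by (intro sum.cong) (use ab in \<open>auto simp: q_def\<close>)
  also have "\<dots> = 0" using ab eq by (simp add: sum_subtractf)
  finally have "q (Suc a) = 0" using indep ab by auto
  then show False by (simp add: q_def)
qed

(* ... and independence over Z. *)
lemma rat_independent_scaled_int_independent:
  fixes \<theta> :: "nat \<Rightarrow> real" and N :: int
  assumes N0: "N \<noteq> 0"
    and indep: "\<forall>q::nat \<Rightarrow> rat. (\<Sum>i=1..d. of_rat (q i) * \<theta> i) = 0 \<longrightarrow> (\<forall>i\<in>{1..d}. q i = 0)"
  shows "module.independent (\<lambda>r. (*) (real_of_int r)) ((\<lambda>i. \<theta> (Suc i) / of_int N) ` {..<d})"
proof -
  interpret Modules.module "(\<lambda>r. (*) (real_of_int r))"
    by (simp add: Modules.module.intro distrib_left mult.commute)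
  define \<theta>' where "\<theta>' = (\<lambda>i. \<theta> (Suc i) / of_int N)"
  have inj: "inj_on \<theta>' {..<d}" unfolding \<theta>'_def by (rule rat_independent_scaled_inj[OF N0 indep])
  show ?thesis
    unfolding \<theta>'_def[symmetric] independent_explicit_module
  proof (intro allI impI)
    fix t u v assume t: "finite t" "t \<subseteq> \<theta>' ` {..<d}"
      and sum0: "(\<Sum>v\<in>t. real_of_int (u v) * v) = 0" and v: "v \<in> t"
    define I where "I = {i. i < d \<and> \<theta>' i \<in> t}"
    have tI: "t = \<theta>' ` I" using t(2) by (auto simp: I_def)
    have injI: "inj_on \<theta>' I" using inj by (rule inj_on_subset) (auto simp: I_def)
    define q :: "nat \<Rightarrow> rat" where
      "q = (\<lambda>i. if 1 \<le> i \<and> \<theta>' (i - 1) \<in> t then of_int (u (\<theta>' (i - 1))) / of_int N else 0)"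
    have "(\<Sum>i=1..d. of_rat (q i) * \<theta> i) = (\<Sum>i<d. of_rat (q (Suc i)) * \<theta> (Suc i))"
      by (subst image_Suc_lessThan[symmetric]) (simp add: sum.reindex)
    also have "\<dots> = (\<Sum>i<d. if \<theta>' i \<in> t then real_of_int (u (\<theta>' i)) * \<theta>' i else 0)"
      by (intro sum.cong) (auto simp: q_def \<theta>'_def of_rat_divide)
    also have "\<dots> = (\<Sum>i\<in>I. real_of_int (u (\<theta>' i)) * \<theta>' i)"
      unfolding I_def by (simp add: sum.If_cases Collect_conj_eq lessThan_def Int_commute)
    also have "\<dots> = (\<Sum>v\<in>t. real_of_int (u v) * v)"
      unfolding tI by (simp add: sum.reindex[OF injI])
    finally have "(\<Sum>i=1..d. of_rat (q i) * \<theta> i) = 0" using sum0 by simp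
    then have q0: "\<forall>i\<in>{1..d}. q i = 0" using indep by blast
    obtain i where i: "i \<in> I" "v = \<theta>' i" using v tI by auto
    have "q (Suc i) = 0" using q0 i by (auto simp: I_def)
    then show "u v = 0" using i N0 by (auto simp: q_def I_def)
  qed
qed

(* Kronecker's theorem applied to theta_i / c^n (c the leading coefficient), followed by the
   scaled integer solution of the homogeneous recurrence: there is t and an integer solution K
   of the recurrence with t*theta_i - v_i - K_i small for the initial indices i <= d. *)
lemma kronecker_initial_segment:
  fixes A :: "int poly" and \<theta> v :: "nat \<Rightarrow> real" and B :: real
  assumes deg: "degree A = d" and A0: "A \<noteq> 0"
    and indep: "\<forall>q::nat \<Rightarrow> rat. (\<Sum>i=1..d. of_rat (q i) * \<theta> i) = 0 \<longrightarrow> (\<forall>i\<in>{1..d}. q i = 0)"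
    and B: "B > 0"
  shows "\<exists>t K. (\<forall>i. 1 \<le> i \<longrightarrow> i \<le> d \<longrightarrow> \<bar>t * \<theta> i - v i - of_int (K i)\<bar> < B)
             \<and> (\<forall>j. 1 \<le> j \<longrightarrow> j \<le> n \<longrightarrow> rec_val A K j = 0)"
proof -
  define c where "c = coeff A d"
  have "c \<noteq> 0" using A0 deg unfolding c_def by (metis leading_coeff_0_iff)
  then have N0: "c ^ n \<noteq> 0" by simp
  define N where "N = real_of_int (c ^ n)"
  have N: "N \<noteq> 0" using N0 by (simp add: N_def)
  obtain t h where th:
    "\<And>i. i < d \<Longrightarrow> \<bar>t * (\<theta> (Suc i) / of_int (c ^ n)) - of_int (h i) - v (Suc i) / N\<bar> < B / \<bar>N\<bar>"
    using Kronecker_thm_1[of "\<lambda>i. \<theta> (Suc i) / of_int (c ^ n)" d "B / \<bar>N\<bar>" "\<lambda>i. v (Suc i) / N"]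
      rat_independent_scaled_int_independent[OF N0 indep]
      rat_independent_scaled_inj[OF N0 indep] B N
    by auto
  obtain K where K_init: "\<forall>i. i \<le> d \<longrightarrow> K i = c ^ n * h (i - 1)"
    and K_rec: "\<forall>j. 1 \<le> j \<longrightarrow> j \<le> n \<longrightarrow> rec_val A K j = c ^ n * 0"
    using rec_val_scaled_solution[OF deg, where f = "\<lambda>i. h (i - 1)" and N = n and n = "\<lambda>_. 0"]
    unfolding c_def by blast
  show ?thesis
  proof (intro exI[of _ t] exI[of _ K] conjI allI impI)
    fix i assume i: "1 \<le> i" "i \<le> d"
    then have "i - 1 < d" "Suc (i - 1) = i" by auto
    have "t * \<theta> i - v i - of_int (K i)
        = N * (t * (\<theta> (Suc (i - 1)) / of_int (c ^ n)) - of_int (h (i - 1)) - v (Suc (i - 1)) / N)"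
      using K_init i N \<open>c \<noteq> 0\<close> \<open>Suc (i - 1) = i\<close> by (simp add: N_def field_simps)
    then have "\<bar>t * \<theta> i - v i - of_int (K i)\<bar>
        = \<bar>N\<bar> * \<bar>t * (\<theta> (Suc (i - 1)) / of_int (c ^ n)) - of_int (h (i - 1)) - v (Suc (i - 1)) / N\<bar>"
      by (simp add: abs_mult)
    also have "\<dots> < \<bar>N\<bar> * (B / \<bar>N\<bar>)"
      using th[OF \<open>i - 1 < d\<close>] N by (intro mult_strict_left_mono) auto
    finally show "\<bar>t * \<theta> i - v i - of_int (K i)\<bar> < B" using N by simp
  next
    fix j assume "1 \<le> j" "j \<le> n"
    then show "rec_val A K j = 0" using K_rec by simp
  qed
qed

(* A real solution v of the recurrence is approximated modulo Z, on all positions 1..n+d, by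
   multiples of theta: the error is again a solution, small on the initial segment. *)
lemma kronecker_recurrent:
  fixes A :: "int poly" and \<theta> v :: "nat \<Rightarrow> real" and \<delta> :: real
  assumes deg: "degree A = d" and A0: "A \<noteq> 0"
    and indep: "\<forall>q::nat \<Rightarrow> rat. (\<Sum>i=1..d. of_rat (q i) * \<theta> i) = 0 \<longrightarrow> (\<forall>i\<in>{1..d}. q i = 0)"
    and rec_\<theta>: "\<forall>j. 1 \<le> j \<longrightarrow> j \<le> n \<longrightarrow> rec_val (map_poly of_int A) \<theta> j = 0"
    and rec_v: "\<forall>j. 1 \<le> j \<longrightarrow> j \<le> n \<longrightarrow> rec_val (map_poly of_int A) v j = 0"
    and \<delta>: "\<delta> > 0"
  shows "\<exists>t K. \<forall>l. 1 \<le> l \<longrightarrow> l \<le> n + d \<longrightarrow> \<bar>t * \<theta> l - v l - of_int (K l)\<bar> < \<delta>"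
proof -
  define a :: "real poly" where "a = map_poly of_int A"
  have deg_a: "degree a = d" unfolding a_def using deg by (simp add: degree_map_poly)
  have "coeff A d \<noteq> 0" using A0 deg by (metis leading_coeff_0_iff)
  then have lead: "\<bar>coeff a d\<bar> \<ge> 1" by (simp add: a_def coeff_map_poly)
  define C where "C = 1 + (\<Sum>i\<le>d. \<bar>coeff a i\<bar>)"
  have C1: "C \<ge> 1" unfolding C_def by (simp add: sum_nonneg)
  define B where "B = \<delta> / (2 * C ^ (n + d))"
  have B: "B > 0" unfolding B_def using \<delta> C1 by simp
  obtain t K where init: "\<forall>i. 1 \<le> i \<longrightarrow> i \<le> d \<longrightarrow> \<bar>t * \<theta> i - v i - of_int (K i)\<bar> < B"
    and rec_K: "\<forall>j. 1 \<le> j \<longrightarrow> j \<le> n \<longrightarrow> rec_val A K j = 0"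
    using kronecker_initial_segment[OF deg A0 indep B] by blast
  define e where "e = (\<lambda>l. t * \<theta> l - v l - of_int (K l))"
  have rec_e: "\<forall>j. 1 \<le> j \<longrightarrow> j \<le> n \<longrightarrow> rec_val a e j = 0"
  proof (intro allI impI)
    fix j assume j: "1 \<le> j" "j \<le> n"
    have "rec_val a e j = t * rec_val a \<theta> j - rec_val a v j - of_int (rec_val A K j)"
      unfolding e_def rec_val_diff a_def by (simp add: rec_val_scale_seq rec_val_of_int)
    then show "rec_val a e j = 0" using rec_\<theta> rec_v rec_K j by (simp add: a_def)
  qed
  have "\<forall>l. 1 \<le> l \<longrightarrow> l \<le> n + d \<longrightarrow> \<bar>e l\<bar> \<le> C ^ l * B"
    using rec_val_zero_growth[OF deg_a lead rec_e, of B] init B unfolding C_def e_def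
    by (auto intro: less_imp_le)
  show ?thesis
  proof (intro exI[of _ t] exI[of _ K] allI impI)
    fix l assume l: "1 \<le> l" "l \<le> n + d"
    have "\<bar>t * \<theta> l - v l - of_int (K l)\<bar> \<le> C ^ l * B"
      using \<open>\<forall>l. _ \<longrightarrow> _ \<longrightarrow> \<bar>e l\<bar> \<le> C ^ l * B\<close> l by (simp add: e_def)
    also have "\<dots> \<le> C ^ (n + d) * B" using C1 B l by (intro mult_right_mono power_increasing) auto
    also have "\<dots> = \<delta> / 2" using C1 unfolding B_def by simp
    finally show "\<bar>t * \<theta> l - v l - of_int (K l)\<bar> < \<delta>" using \<delta> by simp
  qed
qed

(* The Kronecker step: a point y with integral recurrence values is approximated modulo Z^(n+d)
   by a multiple of theta; y differs from an integer sequence by a solution of the recurrence. *)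
lemma kronecker_integral_values:
  fixes A :: "int poly" and \<theta> y :: "nat \<Rightarrow> real" and \<delta> :: real
  assumes deg: "degree A = d" and prim: "content A = 1"
    and indep: "\<forall>q::nat \<Rightarrow> rat. (\<Sum>i=1..d. of_rat (q i) * \<theta> i) = 0 \<longrightarrow> (\<forall>i\<in>{1..d}. q i = 0)"
    and rec_\<theta>: "\<forall>j. 1 \<le> j \<longrightarrow> j \<le> n \<longrightarrow> rec_val (map_poly of_int A) \<theta> j = 0"
    and y_int: "\<forall>j. 1 \<le> j \<longrightarrow> j \<le> n \<longrightarrow> rec_val (map_poly of_int A) y j \<in> \<int>"
    and \<delta>: "\<delta> > 0"
  shows "\<exists>t K. \<forall>l. 1 \<le> l \<longrightarrow> l \<le> n + d \<longrightarrow> \<bar>t * \<theta> l - y l - of_int (K l)\<bar> < \<delta>"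
proof -
  define a :: "real poly" where "a = map_poly of_int A"
  have A0: "A \<noteq> 0" using prim by auto
  obtain k where k: "\<forall>j. 1 \<le> j \<longrightarrow> j \<le> n \<longrightarrow> rec_val A k j = \<lfloor>rec_val a y j\<rfloor>"
    using rec_val_surj[OF prim deg, where N = n and n = "\<lambda>j. \<lfloor>rec_val a y j\<rfloor>"] by blast
  define v where "v = (\<lambda>l. y l - of_int (k l))"
  have rec_v: "\<forall>j. 1 \<le> j \<longrightarrow> j \<le> n \<longrightarrow> rec_val a v j = 0"
  proof (intro allI impI)
    fix j assume j: "1 \<le> j" "j \<le> n"
    have "rec_val a v j = rec_val a y j - of_int (rec_val A k j)"
      unfolding v_def rec_val_diff a_def by (simp add: rec_val_of_int)
    then show "rec_val a v j = 0" using k y_int j by (simp add: a_def)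
  qed
  obtain t K where tK: "\<forall>l. 1 \<le> l \<longrightarrow> l \<le> n + d \<longrightarrow> \<bar>t * \<theta> l - v l - of_int (K l)\<bar> < \<delta>"
    using kronecker_recurrent[OF deg A0 indep rec_\<theta> rec_v[unfolded a_def] \<delta>] by blast
  show ?thesis
  proof (intro exI[of _ t] exI[of _ "\<lambda>l. K l - k l"] allI impI)
    fix l assume l: "1 \<le> l" "l \<le> n + d"
    have eq: "t * \<theta> l - y l - of_int (K l - k l) = t * \<theta> l - v l - of_int (K l)"
      by (simp add: v_def)
    have "\<bar>t * \<theta> l - v l - of_int (K l)\<bar> < \<delta>" using tK l by blast
    then show "\<bar>t * \<theta> l - y l - of_int (K l - k l)\<bar> < \<delta>" by (simp only: eq)
  qed
qed

section \<open>Factorisation into linear factors\<close>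

definition linprod :: "complex multiset \<Rightarrow> complex poly" where
  "linprod R = (\<Prod>\<alpha>\<in>#R. [:-\<alpha>, 1:])"

lemma linprod_empty [simp]: "linprod {#} = 1"
  by (simp add: linprod_def)

lemma linprod_add_mset [simp]: "linprod (add_mset a R) = [:-a, 1:] * linprod R"
  by (simp add: linprod_def)

lemma linprod_union: "linprod (R + S) = linprod R * linprod S"
  by (simp add: linprod_def)

lemma poly_linprod: "poly (linprod R) x = (\<Prod>\<alpha>\<in>#R. x - \<alpha>)"
  by (induction R) (auto simp: algebra_simps)

lemma coeff0_linprod: "coeff (linprod R) 0 = (\<Prod>\<alpha>\<in>#R. - \<alpha>)"
  by (simp add: poly_0_coeff_0[symmetric] poly_linprod)

lemma lead_coeff_linprod: "lead_coeff (linprod R) = 1"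
proof (induction R)
  case (add a R)
  have "lead_coeff (linprod (add_mset a R)) = lead_coeff [:-a, 1:] * lead_coeff (linprod R)"
    by (simp only: linprod_add_mset lead_coeff_mult)
  then show ?case using add.IH by simp
qed simp

lemma proots_linprod: "proots (linprod R) = R"
proof (induction R)
  case (add a R)
  have "linprod R \<noteq> 0" using lead_coeff_linprod[of R] by auto
  then have "proots (linprod (add_mset a R)) = proots [:-a, 1:] + proots (linprod R)"
    unfolding linprod_add_mset by (intro proots_mult) auto
  then show ?case using add.IH by simp
qed simp

lemma linprod_proots: "smult (lead_coeff p) (linprod (proots p)) = (p :: complex poly)"
  unfolding linprod_def by (rule complex_poly_decompose_multiset)

lemma linprod_cnj: "map_poly cnj (linprod R) = linprod (image_mset cnj R)"
proof -
  have "poly (map_poly cnj (linprod R)) x = poly (linprod (image_mset cnj R)) x" for x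
    by (induction R) (auto simp: poly_linprod)
  then show ?thesis by (intro poly_ext) auto
qed

lemma linprod_real:
  assumes "image_mset cnj R = R"
  shows "Im (coeff (linprod R) i) = 0"
proof -
  have "map_poly cnj (linprod R) = linprod R" using assms by (simp add: linprod_cnj)
  then have "cnj (coeff (linprod R) i) = coeff (linprod R) i"
    by (metis coeff_map_poly complex_cnj_zero)
  then show ?thesis by (metis Reals_cnj_iff complex_is_Real_iff)
qed

lemma filter_mset_cnj_closed:
  assumes "image_mset cnj R = R" "\<And>\<alpha>. P (cnj \<alpha>) = P \<alpha>"
  shows "image_mset cnj (filter_mset P R) = filter_mset P R"
proof -
  have "image_mset cnj (filter_mset P R) = image_mset cnj (filter_mset (P \<circ> cnj) R)"
    using assms(2) by (simp add: o_def)
  also have "\<dots> = filter_mset P (image_mset cnj R)"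
    by (induction R) auto
  finally show ?thesis using assms(1) by simp
qed

lemma map_poly_of_real_mult:
  "map_poly (of_real :: real \<Rightarrow> complex) (p * q) = map_poly of_real p * map_poly of_real q"
  by (rule poly_eqI) (simp add: coeff_mult coeff_map_poly)

lemma map_poly_of_real_inj:
  assumes "map_poly (of_real :: real \<Rightarrow> complex) p = map_poly of_real q"
  shows "p = q"
proof (rule poly_eqI)
  fix n
  have "(of_real (coeff p n) :: complex) = of_real (coeff q n)"
    using arg_cong[OF assms, of "\<lambda>r. coeff r n"] by (simp add: coeff_map_poly)
  then show "coeff p n = coeff q n" by simp
qed

lemma norm_prod_mset: "cmod (\<Prod>\<alpha>\<in>#R. f \<alpha>) = (\<Prod>\<alpha>\<in>#R. cmod (f \<alpha>))"
  by (induction R) (auto simp: norm_mult)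

lemma map_poly_of_real_Re:
  assumes "\<And>i. Im (coeff p i) = 0"
  shows "map_poly of_real (map_poly Re p) = p"
  by (rule poly_eqI) (simp add: coeff_map_poly assms complex_eq_iff)

lemma proots_real_poly_cnj:
  fixes a :: "real poly"
  assumes "a \<noteq> 0"
  shows "image_mset cnj (proots (map_poly of_real a)) = proots (map_poly of_real a)"
proof -
  define P :: "complex poly" where "P = map_poly of_real a"
  have "P \<noteq> 0" using map_poly_of_real_inj[of a 0] assms by (auto simp: P_def)
  then have lc: "lead_coeff P \<noteq> 0" by simp
  have "map_poly cnj P = P" unfolding P_def by (rule poly_eqI) (simp add: coeff_map_poly)
  moreover have "map_poly cnj P = smult (cnj (lead_coeff P)) (linprod (image_mset cnj (proots P)))"
    by (subst (1) linprod_proots[symmetric, of P], subst map_poly_smult) (auto simp: linprod_cnj)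
  ultimately have "proots P = proots (smult (cnj (lead_coeff P)) (linprod (image_mset cnj (proots P))))"
    by simp
  then show ?thesis using lc by (simp add: P_def proots_linprod)
qed

lemma real_factorisation_split:
  fixes a :: "real poly" and c :: real
  assumes fac: "map_poly of_real a = smult (of_real c) (linprod R)"
    and cnj: "image_mset cnj R = R" and P: "\<And>\<alpha>. P (cnj \<alpha>) = P \<alpha>"
  shows "\<exists>g q. a = g * q \<and> map_poly of_real g = smult (of_real c) (linprod (filter_mset P R))
               \<and> map_poly of_real q = linprod (filter_mset (\<lambda>\<alpha>. \<not> P \<alpha>) R)"
proof -
  define RP where "RP = filter_mset P R"
  define RN where "RN = filter_mset (\<lambda>\<alpha>. \<not> P \<alpha>) R"
  have cnj_P: "image_mset cnj RP = RP" unfolding RP_def by (rule filter_mset_cnj_closed[OF cnj]) (rule P)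
  have cnj_N: "image_mset cnj RN = RN" unfolding RN_def by (rule filter_mset_cnj_closed[OF cnj]) (simp add: P)
  define g where "g = map_poly Re (smult (of_real c) (linprod RP))"
  define q where "q = map_poly Re (linprod RN)"
  have g: "map_poly of_real g = smult (of_real c) (linprod RP)"
    unfolding g_def by (rule map_poly_of_real_Re) (simp add: linprod_real[OF cnj_P])
  have q: "map_poly of_real q = linprod RN"
    unfolding q_def by (rule map_poly_of_real_Re) (simp add: linprod_real[OF cnj_N])
  have "linprod R = linprod RP * linprod RN"
    unfolding RP_def RN_def by (metis linprod_union multiset_partition)
  then have "map_poly of_real a = map_poly (of_real :: real \<Rightarrow> complex) (g * q)"
    by (simp add: fac map_poly_of_real_mult g q mult_smult_left)
  then have "a = g * q" by (rule map_poly_of_real_inj)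
  then show ?thesis using g q unfolding RP_def RN_def by blast
qed

section \<open>Moving a point to integral recurrence values\<close>

(* Greedy rounding: if the constant coefficient kappa of g is nonzero, fixing positions
   n, n-1, ..., 1 in turn makes all values rec_val g w j (1 <= j <= n) integers, changing each
   coordinate by at most 1/(2|kappa|). *)
lemma round_rec_values:
  fixes g :: "real poly" and t :: "nat \<Rightarrow> real"
  assumes g0: "coeff g 0 \<noteq> 0"
  shows "\<exists>w. (\<forall>j. \<bar>w j - t j\<bar> \<le> 1 / (2 * \<bar>coeff g 0\<bar>))
           \<and> (\<forall>j. 1 \<le> j \<longrightarrow> j \<le> n \<longrightarrow> rec_val g w j \<in> \<int>)"
proof -
  define \<kappa> where "\<kappa> = coeff g 0"
  have "\<exists>w. (\<forall>j. \<bar>w j - t j\<bar> \<le> 1 / (2 * \<bar>\<kappa>\<bar>))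
          \<and> (\<forall>j. n - k < j \<longrightarrow> j \<le> n \<longrightarrow> rec_val g w j \<in> \<int>)" if "k \<le> n" for k
    using that
  proof (induction k)
    case 0
    show ?case by (intro exI[of _ t]) (auto simp: g0 \<kappa>_def)
  next
    case (Suc k)
    then obtain w where w_close: "\<forall>j. \<bar>w j - t j\<bar> \<le> 1 / (2 * \<bar>\<kappa>\<bar>)"
      and w_int: "\<forall>j. n - k < j \<longrightarrow> j \<le> n \<longrightarrow> rec_val g w j \<in> \<int>" by auto
    define j0 where "j0 = n - k"
    define s where "s = rec_val g (w(j0 := t j0)) j0"
    define v where "v = t j0 + (of_int (round s) - s) / \<kappa>"
    define w' where "w' = w(j0 := v)"
    have "rec_val g w' j0 = s + \<kappa> * (v - t j0)"
      unfolding w'_def s_def \<kappa>_def by (rule rec_val_upd_self)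
    also have "\<dots> = of_int (round s)" using g0 by (simp add: v_def \<kappa>_def)
    finally have new_int: "rec_val g w' j0 \<in> \<int>" by simp
    have old_int: "rec_val g w' j = rec_val g w j" if "j0 < j" for j
      unfolding w'_def by (rule rec_val_cong) (use that in auto)
    have "\<bar>v - t j0\<bar> = \<bar>of_int (round s) - s\<bar> / \<bar>\<kappa>\<bar>" by (simp add: v_def abs_divide)
    also have "\<dots> \<le> (1/2) / \<bar>\<kappa>\<bar>"
      using of_int_round_abs_le[of s] by (intro divide_right_mono) auto
    finally have v_close: "\<bar>v - t j0\<bar> \<le> 1 / (2 * \<bar>\<kappa>\<bar>)" by simp
    show ?case
    proof (intro exI[of _ w'] conjI allI impI)
      fix j show "\<bar>w' j - t j\<bar> \<le> 1 / (2 * \<bar>\<kappa>\<bar>)" using w_close v_close by (simp add: w'_def)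
    next
      fix j assume "n - Suc k < j" "j \<le> n"
      then consider "j = j0" | "j0 < j" "n - k < j" using Suc.prems unfolding j0_def by linarith
      then show "rec_val g w' j \<in> \<int>"
        by cases (use new_int old_int w_int \<open>j \<le> n\<close> in auto)
    qed
  qed
  from this[of n] show ?thesis by (auto simp: \<kappa>_def)
qed

(* A recurrence whose characteristic roots all have modulus <= 1/2 can be solved for any
   bounded right-hand side delta, losing at most a factor 2 per root: solve the first-order
   recurrences u_(j+1) = delta_j + gamma u_j one root at a time. *)
lemma solve_contracting_recurrence:
  fixes R :: "complex multiset"
  assumes "\<forall>\<gamma>\<in>#R. cmod \<gamma> \<le> 1/2" "\<forall>j. cmod (\<delta> j) \<le> D"
  shows "\<exists>u. (\<forall>j. cmod (u j) \<le> 2 ^ size R * D) \<and> (\<forall>j. rec_val (linprod R) u j = \<delta> j)"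
  using assms
proof (induction R arbitrary: \<delta> D)
  case empty
  then show ?case by (intro exI[of _ \<delta>]) (auto simp: rec_val_one)
next
  case (add \<gamma> R)
  define v where "v = rec_nat 0 (\<lambda>j vj. \<delta> j + \<gamma> * vj)"
  have v0: "v 0 = 0" and vS: "v (Suc j) = \<delta> j + \<gamma> * v j" for j by (simp_all add: v_def)
  have \<gamma>: "cmod \<gamma> \<le> 1/2" using add.prems by simp
  have v_bound: "cmod (v j) \<le> 2 * D" for j
  proof (induction j)
    case 0
    have "0 \<le> D" using add.prems(2) norm_ge_zero[of "\<delta> 0"] by (meson order_trans)
    then show ?case by (simp add: v0)
  next
    case (Suc j)
    have "cmod (v (Suc j)) \<le> cmod (\<delta> j) + cmod \<gamma> * cmod (v j)"
      unfolding vS by (metis norm_mult norm_triangle_ineq)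
    also have "\<dots> \<le> D + 1/2 * (2 * D)"
      using add.prems(2) \<gamma> Suc by (intro add_mono mult_mono) auto
    finally show ?case by simp
  qed
  have v_rec: "rec_val [:-\<gamma>, 1:] v j = \<delta> j" for j
    by (simp add: rec_val_def vS)
  from add.IH[of v "2 * D"] add.prems v_bound obtain u where
    u_bound: "\<forall>j. cmod (u j) \<le> 2 ^ size R * (2 * D)" and u_rec: "\<forall>j. rec_val (linprod R) u j = v j"
    by auto
  have "rec_val (linprod (add_mset \<gamma> R)) u j = \<delta> j" for j
  proof -
    have "rec_val (linprod (add_mset \<gamma> R)) u j = rec_val [:-\<gamma>, 1:] (rec_val (linprod R) u) j"
      by (simp only: linprod_add_mset rec_val_mult)
    also have "\<dots> = rec_val [:-\<gamma>, 1:] v j" using u_rec by (metis ext)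
    finally show ?thesis using v_rec by simp
  qed
  then show ?case using u_bound by (intro exI[of _ u]) (simp add: mult_ac)
qed

(* The same for a real polynomial and real data, by taking real parts. *)
lemma solve_contracting_recurrence_real:
  fixes q :: "real poly" and \<delta> :: "nat \<Rightarrow> real"
  assumes q: "map_poly of_real q = linprod R" and small: "\<forall>\<gamma>\<in>#R. cmod \<gamma> \<le> 1/2"
    and \<delta>: "\<forall>j. \<bar>\<delta> j\<bar> \<le> D"
  shows "\<exists>u. (\<forall>j. \<bar>u j\<bar> \<le> 2 ^ size R * D) \<and> (\<forall>j. rec_val q u j = \<delta> j)"
proof -
  have "\<forall>j. cmod (of_real (\<delta> j) :: complex) \<le> D" using \<delta> by simp
  then obtain u where u_bound: "\<forall>j. cmod (u j) \<le> 2 ^ size R * D"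
    and u_rec: "\<forall>j. rec_val (linprod R) u j = of_real (\<delta> j)"
    using solve_contracting_recurrence[OF small, of "\<lambda>j. of_real (\<delta> j)" D] by blast
  have "rec_val q (\<lambda>j. Re (u j)) j = \<delta> j" for j
    using rec_val_Re[of q u j] u_rec by (simp add: q)
  moreover have "\<bar>Re (u j)\<bar> \<le> 2 ^ size R * D" for j
    using abs_Re_le_cmod[of "u j"] u_bound by (meson order_trans)
  ultimately show ?thesis by (intro exI[of _ "\<lambda>j. Re (u j)"] conjI allI) auto
qed

lemma approx_via_factorisation:
  fixes a g q :: "real poly"
  assumes fac: "a = g * q"
    and round: "\<And>t. \<exists>w. (\<forall>j. \<bar>w j - t j\<bar> \<le> \<beta>) \<and> (\<forall>j. 1 \<le> j \<longrightarrow> j \<le> n \<longrightarrow> rec_val g w j \<in> \<int>)"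
    and solve: "\<And>\<delta>. \<forall>j. \<bar>\<delta> j\<bar> \<le> \<beta> \<Longrightarrow> \<exists>u. (\<forall>j. \<bar>u j\<bar> \<le> \<gamma>) \<and> (\<forall>j. rec_val q u j = \<delta> j)"
  shows "\<exists>y. (\<forall>j. \<bar>y j - x j\<bar> \<le> \<gamma>) \<and> (\<forall>j. 1 \<le> j \<longrightarrow> j \<le> n \<longrightarrow> rec_val a y j \<in> \<int>)"
proof -
  obtain w where w_close: "\<forall>j. \<bar>w j - rec_val q x j\<bar> \<le> \<beta>"
    and w_int: "\<forall>j. 1 \<le> j \<longrightarrow> j \<le> n \<longrightarrow> rec_val g w j \<in> \<int>"
    using round by blast
  obtain u where u_bound: "\<forall>j. \<bar>u j\<bar> \<le> \<gamma>" and u_rec: "\<forall>j. rec_val q u j = w j - rec_val q x j"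
    using solve[of "\<lambda>j. w j - rec_val q x j"] w_close by blast
  have "rec_val q (\<lambda>j. x j + u j) = w" by (rule ext) (simp add: rec_val_add_seq u_rec)
  then have "rec_val a (\<lambda>j. x j + u j) j = rec_val g w j" for j by (simp add: fac rec_val_mult)
  then show ?thesis using u_bound w_int by (intro exI[of _ "\<lambda>j. x j + u j"]) auto
qed

(* Moving a point to integral values of a = c * prod (z - alpha): split the roots at modulus
   1/2; round with the large roots (constant coefficient c * prod alpha) and invert the small
   ones. *)
lemma approx_small_roots:
  fixes a :: "real poly" and c :: real and R :: "complex multiset"
  assumes fac: "map_poly of_real a = smult (of_real c) (linprod R)"
    and c0: "c \<noteq> 0" and cnj: "image_mset cnj R = R"
  shows "\<exists>y. (\<forall>j. \<bar>y j - x j\<bar> \<le> 1 / (2 * (\<bar>c\<bar> * (\<Prod>\<alpha>\<in>#R. max (1/2) (cmod \<alpha>)))))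
             \<and> (\<forall>j. 1 \<le> j \<longrightarrow> j \<le> n \<longrightarrow> rec_val a y j \<in> \<int>)"
proof -
  define RB where "RB = filter_mset (\<lambda>\<alpha>. 1/2 \<le> cmod \<alpha>) R"
  define RS where "RS = filter_mset (\<lambda>\<alpha>. \<not> 1/2 \<le> cmod \<alpha>) R"
  have R_split: "R = RB + RS" unfolding RB_def RS_def by (rule multiset_partition)
  obtain g q where a: "a = g * q" and g: "map_poly of_real g = smult (of_real c) (linprod RB)"
    and q: "map_poly of_real q = linprod RS"
    using real_factorisation_split[OF fac cnj, of "\<lambda>\<alpha>. 1/2 \<le> cmod \<alpha>"] unfolding RB_def RS_def by auto
  define \<kappa> where "\<kappa> = coeff g 0"
  have "(of_real \<kappa> :: complex) = of_real c * (\<Prod>\<alpha>\<in>#RB. - \<alpha>)"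
    using arg_cong[OF g, of "\<lambda>p. coeff p 0"] by (simp add: \<kappa>_def coeff_map_poly coeff0_linprod)
  then have "cmod (of_real \<kappa> :: complex) = \<bar>c\<bar> * (\<Prod>\<alpha>\<in>#RB. cmod \<alpha>)"
    by (simp add: norm_mult norm_prod_mset)
  then have \<kappa>: "\<bar>\<kappa>\<bar> = \<bar>c\<bar> * (\<Prod>\<alpha>\<in>#RB. cmod \<alpha>)" by simp
  have RB_pos: "(\<Prod>\<alpha>\<in>#RB. cmod \<alpha>) > 0"
    unfolding RB_def by (induction R) (auto intro!: mult_pos_pos)
  have "\<bar>c\<bar> * (\<Prod>\<alpha>\<in>#RB. cmod \<alpha>) > 0" using c0 RB_pos by (intro mult_pos_pos) auto
  then have \<kappa>0: "\<kappa> \<noteq> 0" using \<kappa> by (metis abs_zero less_irrefl)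
  have bound: "\<bar>c\<bar> * (\<Prod>\<alpha>\<in>#R. max (1/2) (cmod \<alpha>)) = \<bar>\<kappa>\<bar> * (1/2) ^ size RS"
  proof -
    have "(\<Prod>\<alpha>\<in>#R. max (1/2) (cmod \<alpha>))
        = (\<Prod>\<alpha>\<in>#RB. max (1/2) (cmod \<alpha>)) * (\<Prod>\<alpha>\<in>#RS. max (1/2) (cmod \<alpha>))"
      by (simp add: R_split)
    also have "(\<Prod>\<alpha>\<in>#RB. max (1/2) (cmod \<alpha>)) = (\<Prod>\<alpha>\<in>#RB. cmod \<alpha>)"
      unfolding RB_def by (induction R) auto
    also have "(\<Prod>\<alpha>\<in>#RS. max (1/2) (cmod \<alpha>)) = (1/2) ^ size RS"
      unfolding RS_def by (induction R) auto
    finally show ?thesis by (simp add: \<kappa> mult_ac)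
  qed
  have "\<exists>y. (\<forall>j. \<bar>y j - x j\<bar> \<le> 2 ^ size RS * (1 / (2 * \<bar>\<kappa>\<bar>)))
            \<and> (\<forall>j. 1 \<le> j \<longrightarrow> j \<le> n \<longrightarrow> rec_val a y j \<in> \<int>)"
  proof (rule approx_via_factorisation[OF a])
    show "\<exists>w. (\<forall>j. \<bar>w j - t j\<bar> \<le> 1 / (2 * \<bar>\<kappa>\<bar>)) \<and> (\<forall>j. 1 \<le> j \<longrightarrow> j \<le> n \<longrightarrow> rec_val g w j \<in> \<int>)"
      for t using round_rec_values[of g t n] \<kappa>0 by (simp add: \<kappa>_def)
    show "\<exists>u. (\<forall>j. \<bar>u j\<bar> \<le> 2 ^ size RS * (1 / (2 * \<bar>\<kappa>\<bar>))) \<and> (\<forall>j. rec_val q u j = \<delta> j)"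
      if "\<forall>j. \<bar>\<delta> j\<bar> \<le> 1 / (2 * \<bar>\<kappa>\<bar>)" for \<delta>
      by (rule solve_contracting_recurrence_real[OF q _ that]) (simp add: RS_def)
  qed
  moreover have "2 ^ size RS * (1 / (2 * \<bar>\<kappa>\<bar>)) = 1 / (2 * (\<bar>\<kappa>\<bar> * (1/2) ^ size RS))"
    by (simp add: power_one_over field_simps)
  ultimately show ?thesis by (simp add: bound)
qed

lemma rec_val_reflect:
  fixes a :: "'a::comm_semiring_1 poly"
  assumes "coeff a 0 \<noteq> 0" "degree a = d" "1 \<le> j" "j \<le> n"
    and "\<And>k. k \<le> d \<Longrightarrow> y (j + k) = y' (n + 1 - j + d - k)"
  shows "rec_val a y j = rec_val (reflect_poly a) y' (n + 1 - j)"
proof -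
  define j' where "j' = n + 1 - j"
  have "rec_val (reflect_poly a) y' j' = (\<Sum>i<Suc d. coeff a (d - i) * y' (j' + i))"
    using assms by (simp add: rec_val_def coeff_reflect_poly lessThan_Suc_atMost)
  also have "\<dots> = (\<Sum>i<Suc d. (\<lambda>k. coeff a k * y' (j' + d - k)) (Suc d - Suc i))"
    by (intro sum.cong) auto
  also have "\<dots> = (\<Sum>k<Suc d. coeff a k * y' (j' + d - k))"
    by (rule sum.nat_diff_reindex)
  also have "\<dots> = (\<Sum>k<Suc d. coeff a k * y (j + k))"
    by (intro sum.cong) (use assms in \<open>auto simp: j'_def\<close>)
  also have "\<dots> = rec_val a y j" using assms by (simp add: rec_val_def lessThan_Suc_atMost)
  finally show ?thesis by (simp add: j'_def)
qed

lemma reflect_linprod: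
  assumes "0 \<notin># R"
  shows "reflect_poly (linprod R) = smult (\<Prod>\<alpha>\<in>#R. - \<alpha>) (linprod (image_mset inverse R))"
  using assms
proof (induction R)
  case (add a R)
  have a0: "a \<noteq> 0" using add.prems by auto
  have lin: "reflect_poly [:-a, 1:] = smult (-a) [:- inverse a, 1:]"
    using a0 by (simp add: reflect_poly_def cCons_def)
  have "reflect_poly (linprod (add_mset a R)) = reflect_poly [:-a, 1:] * reflect_poly (linprod R)"
    by (simp only: linprod_add_mset reflect_poly_mult)
  also have "\<dots> = smult (-a) [:- inverse a, 1:] * smult (\<Prod>\<alpha>\<in>#R. - \<alpha>) (linprod (image_mset inverse R))"
    using add.IH add.prems by (simp only: lin) simp
  also have "\<dots> = smult (-a * (\<Prod>\<alpha>\<in>#R. - \<alpha>)) ([:- inverse a, 1:] * linprod (image_mset inverse R))"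
    by (simp only: mult_smult_left mult_smult_right smult_smult mult.commute[of "\<Prod>\<alpha>\<in>#R. - \<alpha>" "-a"])
  also have "[:- inverse a, 1:] * linprod (image_mset inverse R) = linprod (image_mset inverse (add_mset a R))"
    by (simp only: image_mset_add_mset linprod_add_mset)
  finally show ?case by simp
qed (simp add: reflect_poly_def)

lemma reflect_map_of_real:
  "map_poly (of_real :: real \<Rightarrow> complex) (reflect_poly p) = reflect_poly (map_poly of_real p)"
  by (rule poly_eqI) (simp add: coeff_reflect_poly coeff_map_poly degree_map_poly)

lemma prod_inverse_max:
  assumes "0 \<notin># R"
  shows "(\<Prod>\<alpha>\<in>#R. cmod \<alpha>) * (\<Prod>\<alpha>\<in>#image_mset inverse R. max (1/2) (cmod \<alpha>))
       = (\<Prod>\<alpha>\<in>#R. max 1 (cmod \<alpha> / 2))"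
  using assms
proof (induction R)
  case (add a R)
  have "cmod a > 0" using add.prems by auto
  moreover have "cmod (inverse a) = 1 / cmod a" by (simp add: norm_inverse divide_inverse)
  ultimately have e: "cmod a * max (1/2) (cmod (inverse a)) = max 1 (cmod a / 2)"
    by (cases "cmod a \<le> 2") (auto simp: max_def field_simps norm_divide)
  have "(\<Prod>\<alpha>\<in>#add_mset a R. cmod \<alpha>) * (\<Prod>\<alpha>\<in>#image_mset inverse (add_mset a R). max (1/2) (cmod \<alpha>))
     = (cmod a * max (1/2) (cmod (inverse a)))
       * ((\<Prod>\<alpha>\<in>#R. cmod \<alpha>) * (\<Prod>\<alpha>\<in>#image_mset inverse R. max (1/2) (cmod \<alpha>)))"
    by (simp add: mult_ac)
  also have "\<dots> = max 1 (cmod a / 2) * (\<Prod>\<alpha>\<in>#R. max 1 (cmod \<alpha> / 2))"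
    using add.IH add.prems e by simp
  finally show ?case by simp
qed simp

(* The dual displacement bound 1/(2 |c| prod max(1, |alpha|/2)), obtained by applying
   approx_small_roots to the reciprocal polynomial and the reversed sequence; needs a(0) <> 0. *)
lemma approx_large_roots:
  fixes a :: "real poly" and c :: real and R :: "complex multiset"
  assumes fac: "map_poly of_real a = smult (of_real c) (linprod R)"
    and c0: "c \<noteq> 0" and cnj: "image_mset cnj R = R" and a0: "coeff a 0 \<noteq> 0"
  shows "\<exists>y. (\<forall>j. \<bar>y j - x j\<bar> \<le> 1 / (2 * (\<bar>c\<bar> * (\<Prod>\<alpha>\<in>#R. max 1 (cmod \<alpha> / 2)))))
             \<and> (\<forall>j. 1 \<le> j \<longrightarrow> j \<le> n \<longrightarrow> rec_val a y j \<in> \<int>)"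
proof -
  define m where "m = n + degree a"
  define c' where "c' = coeff a 0"
  define R' where "R' = image_mset inverse R"
  have c'_eq: "(of_real c' :: complex) = of_real c * (\<Prod>\<alpha>\<in>#R. - \<alpha>)"
    using arg_cong[OF fac, of "\<lambda>p. coeff p 0"] by (simp add: c'_def coeff_map_poly coeff0_linprod)
  have R0: "0 \<notin># R"
  proof
    assume "0 \<in># R"
    then have "0 \<in># image_mset uminus R" by (metis image_eqI set_image_mset minus_zero)
    then have "(\<Prod>\<alpha>\<in>#R. - \<alpha>) = 0" by (simp only: prod_mset_zero_iff)
    then have "(of_real c' :: complex) = 0" using c'_eq by (simp only: mult_zero_right)
    then show False using a0 by (simp add: c'_def)
  qed
  have fac': "map_poly of_real (reflect_poly a) = smult (of_real c') (linprod R')"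
    by (simp add: reflect_map_of_real fac reflect_poly_smult reflect_linprod[OF R0] R'_def c'_eq)
  have "image_mset cnj R' = image_mset inverse (image_mset cnj R)"
    unfolding R'_def by (simp add: multiset.map_comp o_def complex_cnj_inverse)
  then have cnj': "image_mset cnj R' = R'" using cnj by (simp add: R'_def)
  obtain y' where y'_close: "\<forall>j. \<bar>y' j - x (m + 1 - j)\<bar>
                        \<le> 1 / (2 * (\<bar>c'\<bar> * (\<Prod>\<alpha>\<in>#R'. max (1/2) (cmod \<alpha>))))"
    and y'_int: "\<forall>j. 1 \<le> j \<longrightarrow> j \<le> n \<longrightarrow> rec_val (reflect_poly a) y' j \<in> \<int>"
    using approx_small_roots[OF fac' _ cnj', of "\<lambda>l. x (m + 1 - l)" n] a0 by (auto simp: c'_def)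
  have "cmod (of_real c' :: complex) = \<bar>c\<bar> * (\<Prod>\<alpha>\<in>#R. cmod \<alpha>)"
    by (simp add: c'_eq norm_mult norm_prod_mset)
  then have bound: "\<bar>c'\<bar> * (\<Prod>\<alpha>\<in>#R'. max (1/2) (cmod \<alpha>)) = \<bar>c\<bar> * (\<Prod>\<alpha>\<in>#R. max 1 (cmod \<alpha> / 2))"
    using prod_inverse_max[OF R0] by (simp add: R'_def mult.assoc)
  have "0 \<le> (\<Prod>\<alpha>\<in>#R. max 1 (cmod \<alpha> / 2))" by (induction R) auto
  then have bound_nonneg: "0 \<le> 1 / (2 * (\<bar>c\<bar> * (\<Prod>\<alpha>\<in>#R. max 1 (cmod \<alpha> / 2))))"
    by simp
  define y where "y = (\<lambda>l. if 1 \<le> l \<and> l \<le> m then y' (m + 1 - l) else x l)"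
  show ?thesis
  proof (intro exI[of _ y] conjI allI impI)
    fix l
    show "\<bar>y l - x l\<bar> \<le> 1 / (2 * (\<bar>c\<bar> * (\<Prod>\<alpha>\<in>#R. max 1 (cmod \<alpha> / 2))))"
      using y'_close[rule_format, of "m + 1 - l"] bound bound_nonneg by (auto simp: y_def)
  next
    fix j assume j: "1 \<le> j" "j \<le> n"
    have "rec_val a y j = rec_val (reflect_poly a) y' (n + 1 - j)"
      by (rule rec_val_reflect[OF a0 refl j]) (use j in \<open>auto simp: y_def m_def\<close>)
    then show "rec_val a y j \<in> \<int>" using y'_int j by simp
  qed
qed

section \<open>Mahler measures\<close>

lemma linprod_pcompose:
  assumes "s \<noteq> 0"
  shows "linprod R \<circ>\<^sub>p [:0, s:] = smult (s ^ size R) (linprod (image_mset (\<lambda>\<alpha>. \<alpha> / s) R))"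
proof (induction R)
  case (add a R)
  have lin: "[:-a, 1:] \<circ>\<^sub>p [:0, s:] = smult s [:-(a/s), 1:]"
    using assms by (simp add: pcompose_pCons)
  have "linprod (add_mset a R) \<circ>\<^sub>p [:0, s:] = ([:-a, 1:] \<circ>\<^sub>p [:0, s:]) * (linprod R \<circ>\<^sub>p [:0, s:])"
    by (simp only: linprod_add_mset pcompose_mult)
  also have "\<dots> = smult (s * s ^ size R) ([:-(a/s), 1:] * linprod (image_mset (\<lambda>\<alpha>. \<alpha> / s) R))"
    by (simp only: lin add.IH mult_smult_left mult_smult_right smult_smult mult.commute[of "s ^ size R" s])
  also have "[:-(a/s), 1:] * linprod (image_mset (\<lambda>\<alpha>. \<alpha> / s) R) = linprod (image_mset (\<lambda>\<alpha>. \<alpha> / s) (add_mset a R))"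
    by (simp only: image_mset_add_mset linprod_add_mset)
  finally show ?case by simp
qed (simp add: pcompose_1)

lemma prod_scale_max:
  assumes "s > 0"
  shows "s ^ size R * (\<Prod>\<alpha>\<in>#R. max 1 (cmod \<alpha> / s)) = (\<Prod>\<alpha>\<in>#R. max s (cmod \<alpha>))"
proof (induction R)
  case (add a R)
  have "s * max 1 (cmod a / s) = max s (cmod a)" using assms by (simp add: max_def field_simps)
  moreover have "s ^ size (add_mset a R) * (\<Prod>\<alpha>\<in>#add_mset a R. max 1 (cmod \<alpha> / s))
      = (s * max 1 (cmod a / s)) * (s ^ size R * (\<Prod>\<alpha>\<in>#R. max 1 (cmod \<alpha> / s)))"
    by (simp add: mult_ac)
  ultimately show ?case using add.IH by simp
qed simp

lemma mahler_measure_pcompose: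
  fixes p :: "complex poly"
  assumes "p \<noteq> 0" "s \<noteq> 0"
  shows "mahler_measure (p \<circ>\<^sub>p [:0, s:])
       = cmod (lead_coeff p) * (\<Prod>\<alpha>\<in>#proots p. max (cmod s) (cmod \<alpha>))"
proof -
  define R where "R = proots p"
  define c where "c = lead_coeff p"
  have c0: "c \<noteq> 0" using assms(1) by (simp add: c_def)
  have "p \<circ>\<^sub>p [:0, s:] = smult (c * s ^ size R) (linprod (image_mset (\<lambda>\<alpha>. \<alpha> / s) R))"
    using linprod_proots[of p] assms(2)
    by (metis R_def c_def linprod_pcompose pcompose_smult smult_smult)
  then have "mahler_measure (p \<circ>\<^sub>p [:0, s:])
      = cmod c * (cmod s ^ size R * (\<Prod>\<alpha>\<in>#image_mset (\<lambda>\<alpha>. \<alpha> / s) R. max 1 (cmod \<alpha>)))"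
    using c0 assms(2)
    by (simp add: mahler_measure_def proots_linprod lead_coeff_linprod norm_mult norm_power)
  also have "(\<Prod>\<alpha>\<in>#image_mset (\<lambda>\<alpha>. \<alpha> / s) R. max 1 (cmod \<alpha>)) = (\<Prod>\<alpha>\<in>#R. max 1 (cmod \<alpha> / cmod s))"
    by (simp add: multiset.map_comp o_def norm_divide)
  also have "cmod s ^ size R * \<dots> = (\<Prod>\<alpha>\<in>#R. max (cmod s) (cmod \<alpha>))"
    using assms(2) by (simp add: prod_scale_max)
  finally show ?thesis by (simp add: R_def c_def)
qed

(* The two displacement bounds are mahler measures of a(z/2) and a(2z), up to 2^d. *)
lemma approx_integral_values:
  fixes a :: "real poly"
  assumes a0: "coeff a 0 \<noteq> 0"
  shows "\<exists>y. (\<forall>j. \<bar>y j - x j\<bar> \<le> min (1 / mahler_measure (map_poly of_real a \<circ>\<^sub>p [:0, 1/2:]))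
                                   (2 ^ degree a / mahler_measure (map_poly of_real a \<circ>\<^sub>p [:0, 2:])) / 2)
             \<and> (\<forall>j. 1 \<le> j \<longrightarrow> j \<le> n \<longrightarrow> rec_val a y j \<in> \<int>)"
proof -
  define P :: "complex poly" where "P = map_poly of_real a"
  define R where "R = proots P"
  define c where "c = lead_coeff a"
  have "a \<noteq> 0" using a0 by auto
  then have c0: "c \<noteq> 0" by (simp add: c_def)
  have lc: "lead_coeff P = of_real c" by (simp add: P_def c_def degree_map_poly coeff_map_poly)
  then have P0: "P \<noteq> 0" using c0 by auto
  have fac: "map_poly of_real a = smult (of_real c) (linprod R)"
    using linprod_proots[of P] by (simp add: P_def[symmetric] R_def lc)
  have cnj: "image_mset cnj R = R" unfolding R_def P_def by (rule proots_real_poly_cnj[OF \<open>a \<noteq> 0\<close>])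
  define X where "X = (\<Prod>\<alpha>\<in>#R. max (1/2) (cmod \<alpha>))"
  define Y where "Y = (\<Prod>\<alpha>\<in>#R. max 1 (cmod \<alpha> / 2))"
  have M_half: "1 / mahler_measure (P \<circ>\<^sub>p [:0, 1/2:]) = 1 / (\<bar>c\<bar> * X)"
    using mahler_measure_pcompose[OF P0, of "1/2"] by (simp add: lc X_def R_def)
  have "mahler_measure (P \<circ>\<^sub>p [:0, 2:]) = \<bar>c\<bar> * (2 ^ size R * Y)"
    using mahler_measure_pcompose[OF P0, of 2] prod_scale_max[of 2 R] by (simp add: lc Y_def R_def)
  moreover have "size R = degree a" by (simp add: R_def P_def size_proots_complex degree_map_poly)
  ultimately have M_double: "2 ^ degree a / mahler_measure (P \<circ>\<^sub>p [:0, 2:]) = 1 / (\<bar>c\<bar> * Y)"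
    by simp
  show ?thesis
  proof (cases "1 / (\<bar>c\<bar> * X) \<le> 1 / (\<bar>c\<bar> * Y)")
    case True
    then show ?thesis using approx_small_roots[OF fac c0 cnj, of x n]
      unfolding P_def[symmetric] M_half M_double X_def by (simp add: min_def ac_simps)
  next
    case False
    then show ?thesis using approx_large_roots[OF fac c0 cnj a0, of x n]
      unfolding P_def[symmetric] M_half M_double Y_def by (simp add: min_def ac_simps)
  qed
qed

lemma prod_max_half_bound:
  "(\<Prod>\<alpha>\<in>#R. max 1 (cmod \<alpha>))
     \<le> (\<Prod>\<alpha>\<in>#R. max (1/2) (cmod \<alpha>)) * 2 ^ size (filter_mset (\<lambda>\<alpha>. cmod \<alpha> < 1) R)"
proof (induction R)
  case (add a R)
  define X where "X = (\<Prod>\<alpha>\<in>#R. max (1/2) (cmod \<alpha>))"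
  define Z where "Z = (\<Prod>\<alpha>\<in>#R. max 1 (cmod \<alpha>))"
  define k where "k = size (filter_mset (\<lambda>\<alpha>. cmod \<alpha> < 1) R)"
  have Z0: "Z \<ge> 0" unfolding Z_def by (induction R) auto
  have IH: "Z \<le> X * 2 ^ k" using add.IH by (simp add: X_def Z_def k_def)
  show ?case
  proof (cases "cmod a < 1")
    case True
    have "max 1 (cmod a) * Z \<le> (2 * max (1/2) (cmod a)) * (X * 2 ^ k)"
      using True IH Z0 by (intro mult_mono) auto
    then show ?thesis using True by (simp add: X_def Z_def k_def mult_ac)
  next
    case False
    have "max 1 (cmod a) * Z \<le> max (1/2) (cmod a) * (X * 2 ^ k)"
      using False IH Z0 by (intro mult_mono) auto
    then show ?thesis using False by (simp add: X_def Z_def k_def mult_ac)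
  qed
qed simp

lemma prod_max_double_bound:
  "(\<Prod>\<alpha>\<in>#R. max 1 (cmod \<alpha>))
     \<le> (\<Prod>\<alpha>\<in>#R. max 1 (cmod \<alpha> / 2)) * 2 ^ size (filter_mset (\<lambda>\<alpha>. cmod \<alpha> > 1) R)"
proof (induction R)
  case (add a R)
  define Y where "Y = (\<Prod>\<alpha>\<in>#R. max 1 (cmod \<alpha> / 2))"
  define Z where "Z = (\<Prod>\<alpha>\<in>#R. max 1 (cmod \<alpha>))"
  define k where "k = size (filter_mset (\<lambda>\<alpha>. cmod \<alpha> > 1) R)"
  have Z0: "Z \<ge> 0" unfolding Z_def by (induction R) auto
  have IH: "Z \<le> Y * 2 ^ k" using add.IH by (simp add: Y_def Z_def k_def)
  show ?case
  proof (cases "cmod a > 1")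
    case True
    have "max 1 (cmod a) * Z \<le> (2 * max 1 (cmod a / 2)) * (Y * 2 ^ k)"
      using True IH Z0 by (intro mult_mono) auto
    then show ?thesis using True by (simp add: Y_def Z_def k_def mult_ac)
  next
    case False
    have "max 1 (cmod a) * Z \<le> max 1 (cmod a / 2) * (Y * 2 ^ k)"
      using False IH Z0 by (intro mult_mono) auto
    then show ?thesis using False by (simp add: Y_def Z_def k_def mult_ac)
  qed
qed simp

lemma prod_max_pos: "b > 0 \<Longrightarrow> (\<Prod>\<alpha>\<in>#R. max (b::real) (f \<alpha>)) > 0"
  by (induction R) (auto intro!: mult_pos_pos)

(* Fewer than half of the roots lie strictly inside, or fewer than half strictly outside, the
   unit circle; accordingly one of the two bounds is at most 2^[d/2] / M. *)
lemma min_prod_bound: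
  fixes R :: "complex multiset" and c :: real
  assumes "c > 0"
  shows "min (1 / (c * (\<Prod>\<alpha>\<in>#R. max (1/2) (cmod \<alpha>)))) (1 / (c * (\<Prod>\<alpha>\<in>#R. max 1 (cmod \<alpha> / 2))))
         \<le> 2 ^ (size R div 2) / (c * (\<Prod>\<alpha>\<in>#R. max 1 (cmod \<alpha>)))"
proof -
  define X where "X = (\<Prod>\<alpha>\<in>#R. max (1/2) (cmod \<alpha>))"
  define Y where "Y = (\<Prod>\<alpha>\<in>#R. max 1 (cmod \<alpha> / 2))"
  define Z where "Z = (\<Prod>\<alpha>\<in>#R. max 1 (cmod \<alpha>))"
  define k where "k = size (filter_mset (\<lambda>\<alpha>. cmod \<alpha> < 1) R)"
  define l where "l = size (filter_mset (\<lambda>\<alpha>. cmod \<alpha> > 1) R)"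
  define h where "h = size R div 2"
  have X0: "X > 0" and Y0: "Y > 0" and Z0: "Z > 0"
    unfolding X_def Y_def Z_def by (simp_all add: prod_max_pos)
  have "k + l \<le> size R" unfolding k_def l_def by (induction R) auto
  then consider "k \<le> h" | "l \<le> h" unfolding h_def by linarith
  then show ?thesis
  proof cases
    case 1
    have "Z \<le> X * 2 ^ h"
      using prod_max_half_bound[of R] power_increasing[OF 1, of "2::real"] X0
      unfolding X_def Z_def k_def by (meson order_trans mult_left_mono one_le_numeral less_imp_le)
    then have "1 / (c * X) \<le> 2 ^ h / (c * Z)" using X0 Z0 assms by (simp add: field_simps)
    then show ?thesis unfolding X_def Y_def Z_def h_def by (rule min.coboundedI1)
  next
    case 2
    have "Z \<le> Y * 2 ^ h"
      using prod_max_double_bound[of R] power_increasing[OF 2, of "2::real"] Y0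
      unfolding Y_def Z_def l_def by (meson order_trans mult_left_mono one_le_numeral less_imp_le)
    then have "1 / (c * Y) \<le> 2 ^ h / (c * Z)" using Y0 Z0 assms by (simp add: field_simps)
    then show ?thesis unfolding X_def Y_def Z_def h_def by (rule min.coboundedI2)
  qed
qed

lemma mahler_min_bound:
  fixes p :: "complex poly"
  assumes "p \<noteq> 0"
  shows "min (1 / mahler_measure (p \<circ>\<^sub>p [:0, 1/2:])) (2 ^ degree p / mahler_measure (p \<circ>\<^sub>p [:0, 2:]))
         \<le> 2 ^ (degree p div 2) / mahler_measure p"
proof -
  define R where "R = proots p"
  define c where "c = cmod (lead_coeff p)"
  have c: "c > 0" using assms by (simp add: c_def)
  have size: "size R = degree p" by (simp add: R_def size_proots_complex)
  have "mahler_measure (p \<circ>\<^sub>p [:0, 1/2:]) = c * (\<Prod>\<alpha>\<in>#R. max (1/2) (cmod \<alpha>))"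
    using mahler_measure_pcompose[OF assms, of "1/2"] by (simp add: R_def c_def)
  moreover have "mahler_measure (p \<circ>\<^sub>p [:0, 2:]) = 2 ^ degree p * (c * (\<Prod>\<alpha>\<in>#R. max 1 (cmod \<alpha> / 2)))"
    using mahler_measure_pcompose[OF assms, of 2] prod_scale_max[of 2 R]
    by (simp add: R_def c_def size_proots_complex mult_ac)
  moreover have "mahler_measure p = c * (\<Prod>\<alpha>\<in>#R. max 1 (cmod \<alpha>))"
    by (simp add: mahler_measure_def R_def c_def)
  ultimately show ?thesis using min_prod_bound[OF c, of R] by (simp add: size)
qed

(* The line is eps-dense for every eps >= mu as soon as every point can be moved by mu/2 to
   integral recurrence values: combine with the Kronecker step, at tolerance (eps' - mu)/2. *)
lemma line_eps_dense:
  fixes A :: "int poly" and \<theta> :: "nat \<Rightarrow> real"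
  assumes deg: "degree A = d" and prim: "content A = 1"
    and indep: "\<forall>q::nat \<Rightarrow> rat. (\<Sum>i=1..d. of_rat (q i) * \<theta> i) = 0 \<longrightarrow> (\<forall>i\<in>{1..d}. q i = 0)"
    and rec_\<theta>: "\<forall>j. 1 \<le> j \<longrightarrow> j \<le> n \<longrightarrow> rec_val (map_poly of_int A) \<theta> j = 0"
    and approx: "\<And>x. \<exists>y. (\<forall>j. \<bar>y j - x j\<bar> \<le> \<mu> / 2)
                       \<and> (\<forall>j. 1 \<le> j \<longrightarrow> j \<le> n \<longrightarrow> rec_val (map_poly of_int A) y j \<in> \<int>)"
    and \<epsilon>: "\<mu> \<le> \<epsilon>"
  shows "eps_dense (n + d) \<epsilon> (S_line \<theta>)"
  unfolding eps_dense_def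
proof (intro allI impI)
  fix \<epsilon>' :: real and x :: "nat \<Rightarrow> real" assume "\<epsilon>' > \<epsilon>"
  with \<epsilon> have tol: "(\<epsilon>' - \<mu>) / 2 > 0" by simp
  obtain y where y_close: "\<forall>j. \<bar>y j - x j\<bar> \<le> \<mu> / 2"
    and y_int: "\<forall>j. 1 \<le> j \<longrightarrow> j \<le> n \<longrightarrow> rec_val (map_poly of_int A) y j \<in> \<int>"
    using approx by blast
  obtain t K where tK: "\<forall>l. 1 \<le> l \<longrightarrow> l \<le> n + d \<longrightarrow> \<bar>t * \<theta> l - y l - of_int (K l)\<bar> < (\<epsilon>' - \<mu>) / 2"
    using kronecker_integral_values[OF deg prim indep rec_\<theta> y_int tol] by blast
  show "\<exists>s\<in>S_line \<theta>. \<exists>k. \<exists>u. \<forall>i\<in>{1..n + d}. \<bar>u i\<bar> \<le> \<epsilon>' / 2 \<and> x i = s i + u i + of_int (k i)"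
  proof (intro bexI[of _ "\<lambda>i. t * \<theta> i"] exI[of _ "\<lambda>i. - K i"]
               exI[of _ "\<lambda>i. x i - t * \<theta> i + of_int (K i)"] ballI conjI)
    fix i assume i: "i \<in> {1..n + d}"
    have "\<bar>x i - t * \<theta> i + of_int (K i)\<bar> \<le> \<bar>y i - x i\<bar> + \<bar>t * \<theta> i - y i - of_int (K i)\<bar>"
      by linarith
    also have "\<dots> \<le> \<mu> / 2 + (\<epsilon>' - \<mu>) / 2"
      using y_close tK i by (intro add_mono) (auto intro: less_imp_le)
    finally show "\<bar>x i - t * \<theta> i + of_int (K i)\<bar> \<le> \<epsilon>' / 2" by (simp add: field_simps)
  qed (auto simp: S_line_def)
qed

theorem theorem1:
  fixes m d :: nat and A :: "int poly" and \<theta> :: "nat \<Rightarrow> real"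
  assumes "0 < d" and "d \<le> m"
    and "degree A = d" and "content A = 1" and "coeff A 0 \<noteq> 0"
    and "\<forall>q::nat \<Rightarrow> rat. (\<Sum>i=1..d. of_rat (q i) * \<theta> i) = 0 \<longrightarrow> (\<forall>i\<in>{1..d}. q i = 0)"
    and "\<forall>j\<in>{1..m-d}. (\<Sum>i=0..d. of_int (coeff A i) * \<theta> (j + i)) = 0"
  shows "(\<forall>\<epsilon>::real. \<epsilon> \<ge> min (1 / mahler_measure (map_poly of_int A \<circ>\<^sub>p [:0, 1/2:]))
                                  (2 ^ d / mahler_measure (map_poly of_int A \<circ>\<^sub>p [:0, 2:]))
                 \<longrightarrow> eps_dense m \<epsilon> (S_line \<theta>))
       \<and> min (1 / mahler_measure (map_poly of_int A \<circ>\<^sub>p [:0, 1/2:]))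
             (2 ^ d / mahler_measure (map_poly of_int A \<circ>\<^sub>p [:0, 2:]))
           \<le> 2 ^ (d div 2) / mahler_measure (map_poly of_int A)
       \<and> (\<forall>\<epsilon>::real. \<epsilon> \<ge> 2 ^ (d div 2) / mahler_measure (map_poly of_int A)
                 \<longrightarrow> eps_dense m \<epsilon> (S_line \<theta>))"
proof -
  define n where "n = m - d"
  define \<mu> where "\<mu> = min (1 / mahler_measure (map_poly of_int A \<circ>\<^sub>p [:0, 1/2:]))
                         (2 ^ d / mahler_measure (map_poly of_int A \<circ>\<^sub>p [:0, 2:]))"
  have m: "m = n + d" using assms(2) by (simp add: n_def)
  have A_complex: "map_poly of_int A = map_poly (of_real :: real \<Rightarrow> complex) (map_poly of_int A)"
    by (simp add: map_poly_map_poly o_def)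
  have A_real: "coeff (map_poly of_int A :: real poly) 0 \<noteq> 0" "degree (map_poly of_int A :: real poly) = d"
    using assms(3,5) by (simp_all add: coeff_map_poly degree_map_poly)
  have rec_\<theta>: "\<forall>j. 1 \<le> j \<longrightarrow> j \<le> n \<longrightarrow> rec_val (map_poly of_int A) \<theta> j = 0"
    using assms(3,7) by (auto simp: n_def rec_val_def degree_map_poly coeff_map_poly atLeast0AtMost)
  have "\<exists>y. (\<forall>j. \<bar>y j - x j\<bar> \<le> \<mu> / 2)
          \<and> (\<forall>j. 1 \<le> j \<longrightarrow> j \<le> n \<longrightarrow> rec_val (map_poly of_int A) y j \<in> \<int>)" for x
    using approx_integral_values[OF A_real(1), of x n] unfolding A_complex[symmetric] A_real(2) \<mu>_def .
  then have dense: "\<mu> \<le> \<epsilon> \<Longrightarrow> eps_dense m \<epsilon> (S_line \<theta>)" for \<epsilon>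
    unfolding m by (rule line_eps_dense[OF assms(3,4,6) rec_\<theta>])
  have "degree (map_poly of_int A :: complex poly) = d" using assms(3) by (simp add: degree_map_poly)
  moreover from this have "map_poly of_int A \<noteq> (0 :: complex poly)" using assms(1) by auto
  ultimately have "\<mu> \<le> 2 ^ (d div 2) / mahler_measure (map_poly of_int A)"
    using mahler_min_bound[of "map_poly of_int A"] unfolding \<mu>_def by simp
  then show ?thesis using dense unfolding \<mu>_def by (meson order_trans)
qed

end
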